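(* In the purely diffusive, time-homogeneous case with $r=0$, for every $n\le N$ the solution $G^n$ of the $n$-th Cauchy problem has the form $$G^n(t,x;T,y)=\sum_{\substack{0\le i\le n,\ 0\le j\le n(n+3),\ 0\le k\le n(n+5)/2\\ i+j-k\ge n}}c^n_{i,j,k}\,(x-\bar x)^i\big(\sqrt{T-t}\big)^j\,\partial_x^kG^0(t,x;T,y),$$ where the $c^n_{i,j,k}$ are polynomial functions of $\alpha_0,\alpha_1,\dots,\alpha_n$.
   Context: Diffusion $dX=-\frac{\sigma^2(X)}2dt+\sigma(X)dW$, $a=\sigma^2$ satisfying Assumption A$_N$ ($a$ is $N$ times continuously differentiable, with $a$ and its derivatives up to order $N$ bounded and Lipschitz). Basepoint $\bar x$: $\alpha_0=a(\bar x)$, $\alpha_n=\frac12a^{(n)}(\bar x)/n!$. $L_0=\frac{\alpha_0}2(\partial_{xx}-\partial_x)+\partial_t$, $L_n=L_0+\sum_{k=1}^n\alpha_k(x-\bar x)^k(\partial_{xx}-\partial_x)$. $G^0$ is the (Gaussian) fundamental solution of $L_0$; for $k\ge1$, $G^k(\cdot,\cdot;T,y)$ solves $L_0G^k=-\sum_{h=1}^k\alpha_h(x-\bar x)^h(\partial_{xx}-\partial_x)G^{k-h}$ on $(0,T)\times\mathbb R$, $G^k(T,\cdot;T,y)=0$. *)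

theory Defs
  imports "HOL-Analysis.Analysis"
begin

definition assumption_A :: "nat \<Rightarrow> (real \<Rightarrow> real) \<Rightarrow> bool" where
  "assumption_A N a \<longleftrightarrow>
     (\<forall>k<N. \<forall>x. ((deriv ^^ k) a) differentiable (at x)) \<and>
     (\<forall>k\<le>N. continuous_on UNIV ((deriv ^^ k) a) \<and>
              bounded (range ((deriv ^^ k) a)) \<and>
              (\<exists>L. lipschitz_on L UNIV ((deriv ^^ k) a)))"

definition alpha :: "(real \<Rightarrow> real) \<Rightarrow> real \<Rightarrow> nat \<Rightarrow> real" where
  "alpha a xbar n = (if n = 0 then a xbar else ((deriv ^^ n) a xbar) / (2 * fact n))"

text \<open>Gaussian fundamental solution G^0(t,x;T,y) of
  L_0 = (alpha_0/2)(d_xx - d_x) + d_t (transition density of the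
  arithmetic Brownian motion with drift -alpha_0/2 and variance alpha_0).\<close>
definition G0 :: "real \<Rightarrow> real \<Rightarrow> real \<Rightarrow> real \<Rightarrow> real \<Rightarrow> real" where
  "G0 a0 t x T y =
     exp (- ((y - x + a0 * (T - t) / 2)^2) / (2 * a0 * (T - t))) / sqrt (2 * pi * a0 * (T - t))"

definition idx :: "nat \<Rightarrow> (nat \<times> nat \<times> nat) set" where
  "idx n = {(i, j, k). i \<le> n \<and> j \<le> n * (n + 3) \<and> k \<le> n * (n + 5) div 2 \<and> n + k \<le> i + j}"

definition Gform :: "(nat \<Rightarrow> nat \<Rightarrow> nat \<Rightarrow> real) \<Rightarrow> nat \<Rightarrow> real \<Rightarrow> real \<Rightarrow> real \<Rightarrow> real
                     \<Rightarrow> real \<Rightarrow> real \<Rightarrow> real" where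
  "Gform c n a0 xbar T y t x =
     (\<Sum>(i, j, k)\<in>idx n. c i j k * (x - xbar)^i * (sqrt (T - t))^j *
        (deriv ^^ k) (\<lambda>z. G0 a0 t z T y) x)"

definition Lxx :: "(real \<Rightarrow> real \<Rightarrow> real) \<Rightarrow> real \<Rightarrow> real \<Rightarrow> real" where
  "Lxx u t x = deriv (\<lambda>z. deriv (\<lambda>w. u t w) z) x - deriv (\<lambda>w. u t w) x"

definition test_function :: "(real \<Rightarrow> real) \<Rightarrow> bool" where
  "test_function \<phi> \<longleftrightarrow> (\<forall>k x. ((deriv ^^ k) \<phi>) differentiable (at x)) \<and> bounded {x. \<phi> x \<noteq> 0}"

text \<open>u solves L_0 u = f on (0,T) x R (classically), with terminal condition
  u(T,.) = 0 understood in the sense of distributions in x (as t -> T-).\<close>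
definition cauchy_sol :: "real \<Rightarrow> real \<Rightarrow> (real \<Rightarrow> real \<Rightarrow> real) \<Rightarrow> (real \<Rightarrow> real \<Rightarrow> real) \<Rightarrow> bool" where
  "cauchy_sol a0 T u f \<longleftrightarrow>
     (\<forall>t\<in>{0<..<T}. \<forall>x.
        (\<lambda>s. u s x) differentiable (at t) \<and>
        (\<lambda>z. u t z) differentiable (at x) \<and>
        (\<lambda>z. deriv (\<lambda>w. u t w) z) differentiable (at x) \<and>
        a0 / 2 * Lxx u t x + deriv (\<lambda>s. u s x) t = f t x) \<and>
     (\<forall>\<phi>. test_function \<phi> \<longrightarrow>
        (\<forall>t\<in>{0<..<T}. integrable lborel (\<lambda>x. u t x * \<phi> x)) \<and>
        ((\<lambda>t. integral\<^sup>L lborel (\<lambda>x. u t x * \<phi> x)) \<longlongrightarrow> 0) (at_left T))"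

inductive_set poly_fun :: "nat \<Rightarrow> ((nat \<Rightarrow> real) \<Rightarrow> real) set" for n :: nat where
  const: "(\<lambda>\<alpha>. c) \<in> poly_fun n"
| var: "i \<le> n \<Longrightarrow> (\<lambda>\<alpha>. \<alpha> i) \<in> poly_fun n"
| add: "p \<in> poly_fun n \<Longrightarrow> q \<in> poly_fun n \<Longrightarrow> (\<lambda>\<alpha>. p \<alpha> + q \<alpha>) \<in> poly_fun n"
| mult: "p \<in> poly_fun n \<Longrightarrow> q \<in> poly_fun n \<Longrightarrow> (\<lambda>\<alpha>. p \<alpha> * q \<alpha>) \<in> poly_fun n"

end

theory Submission
  imports Defs "HOL-Probability.Probability"
begin

text \<open>Every \<open>x\<close>-derivative of \<open>G\<^sup>0\<close> is a polynomial in \<open>w = x - y - \<alpha>\<^sub>0 (T - t)/2\<close> and \<open>1/v\<close>,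
  \<open>v = \<alpha>\<^sub>0 (T - t)\<close>, times the heat kernel in \<open>(w, v)\<close>; such functions again solve
  \<open>\<partial>\<^sub>v = \<partial>\<^sub>w\<^sub>w / 2\<close>, so \<open>L\<^sub>0\<close> annihilates \<open>D\<^sub>k = \<partial>\<^sub>x\<^sup>k G\<^sup>0\<close> for every \<open>k\<close>. Hence, with \<open>\<tau> = T - t\<close>,
  \<open>L\<^sub>0\<close> maps \<open>(x - xbar)\<^sup>i \<tau>\<^sup>p\<^sup>+\<^sup>1 D\<^sub>k\<close> to \<open>-(p + 1) (x - xbar)\<^sup>i \<tau>\<^sup>p D\<^sub>k\<close> plus terms of lower degree in
  \<open>x - xbar\<close>, and the source terms of the \<open>n\<close>-th problem can be inverted monomial by monomial.
  This builds \<open>G\<^sup>n\<close> recursively as a finite sum of such monomials whose coefficients are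
  polynomials in \<open>\<alpha>\<^sub>0, \<dots>, \<alpha>\<^sub>n\<close> and whose exponents stay in the stated ranges.
  For \<open>n \<ge> 1\<close> every monomial carries a positive power of \<open>\<tau>\<close>, while \<open>\<integral> D\<^sub>k \<phi>\<close> stays bounded
  as \<open>t \<rightarrow> T\<close> (integrate by parts; \<open>G\<^sup>0(t, \<cdot>)\<close> is a probability density), so \<open>G\<^sup>n(t, \<cdot>) \<rightarrow> 0\<close>
  weakly.\<close>

section \<open>Derivatives of the Gaussian kernel\<close>

definition heat_kernel :: "real \<Rightarrow> real \<Rightarrow> real" where
  "heat_kernel w v = exp (- (w^2) / (2 * v)) / sqrt (2 * pi * v)"

lemma heat_kernel_pos: "v > 0 \<Longrightarrow> heat_kernel w v > 0"
  by (simp add: heat_kernel_def)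

lemma heat_kernel_has_derivative:
  assumes w: "(w has_real_derivative w') (at s)" and v: "(v has_real_derivative v') (at s)"
    and v_pos: "v s > 0"
  shows "((\<lambda>s. heat_kernel (w s) (v s)) has_real_derivative
      (w' * (- w s / v s) + v' * (w s ^ 2 / (2 * v s ^ 2) - 1 / (2 * v s))) * heat_kernel (w s) (v s)) (at s)"
proof -
  have sqrt_pos: "sqrt (2 * pi * v s) > 0" using v_pos by simp
  have inverse_sqrt: "inverse (sqrt (2 * pi * v s)) = sqrt (2 * pi * v s) / (2 * pi * v s)"
    using v_pos by (simp add: field_simps)
  have divide_sqrt: "e / sqrt (2 * pi * v s) = e * sqrt (2 * pi * v s) / (2 * pi * v s)" for e
    by (metis inverse_sqrt divide_inverse mult.commute times_divide_eq_right)
  show ?thesis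
    unfolding heat_kernel_def
    using v_pos sqrt_pos pi_gt_zero
    apply (auto intro!: derivative_eq_intros w v simp: inverse_sqrt)
     apply (smt (verit) mult_pos_pos pi_gt_zero)
    apply (simp only: divide_sqrt)
    apply (simp add: field_simps power2_eq_square)
    done
qed

text \<open>A list of triples \<open>(c, a, b)\<close> represents the function \<open>\<Sum> c w^a / v^b\<close>. The operations
  \<open>heat_poly_dw\<close> and \<open>heat_poly_dv\<close> are chosen so that they describe the partial derivatives of
  \<open>P \<cdot> heat_kernel\<close>, not of \<open>P\<close> alone.\<close>

type_synonym heat_poly = "(real \<times> nat \<times> nat) list"

definition heat_poly_eval :: "heat_poly \<Rightarrow> real \<Rightarrow> real \<Rightarrow> real" where
  "heat_poly_eval P w v = (\<Sum>(c, a, b)\<leftarrow>P. c * w ^ a / v ^ b)"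

definition heat_poly_dw :: "heat_poly \<Rightarrow> heat_poly" where
  "heat_poly_dw P = concat (map (\<lambda>(c, a, b). [(c * real a, a - 1, b), (- c, a + 1, b + 1)]) P)"

definition heat_poly_dv :: "heat_poly \<Rightarrow> heat_poly" where
  "heat_poly_dv P =
     concat (map (\<lambda>(c, a, b). [(- c * real b, a, b + 1), (c / 2, a + 2, b + 2), (- c / 2, a, b + 1)]) P)"

lemma heat_poly_eval_simps [simp]:
  "heat_poly_eval [] w v = 0"
  "heat_poly_eval ((c, a, b) # P) w v = c * w ^ a / v ^ b + heat_poly_eval P w v"
  "heat_poly_eval (P @ Q) w v = heat_poly_eval P w v + heat_poly_eval Q w v"
  by (simp_all add: heat_poly_eval_def)

lemma heat_poly_dw_simps [simp]:
  "heat_poly_dw [] = []"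
  "heat_poly_dw ((c, a, b) # P) = [(c * real a, a - 1, b), (- c, a + 1, b + 1)] @ heat_poly_dw P"
  by (simp_all add: heat_poly_dw_def)

lemma heat_poly_dv_simps [simp]:
  "heat_poly_dv [] = []"
  "heat_poly_dv ((c, a, b) # P) =
     [(- c * real b, a, b + 1), (c / 2, a + 2, b + 2), (- c / 2, a, b + 1)] @ heat_poly_dv P"
  by (simp_all add: heat_poly_dv_def)

lemma heat_poly_kernel_has_derivative:
  assumes w: "(w has_real_derivative w') (at s)" and v: "(v has_real_derivative v') (at s)"
    and v_pos: "v s > 0"
  shows "((\<lambda>s. heat_poly_eval P (w s) (v s) * heat_kernel (w s) (v s)) has_real_derivative
     (w' * heat_poly_eval (heat_poly_dw P) (w s) (v s) + v' * heat_poly_eval (heat_poly_dv P) (w s) (v s))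
       * heat_kernel (w s) (v s)) (at s)"
proof (induction P)
  case Nil
  then show ?case by simp
next
  case (Cons t P)
  obtain c a b where t: "t = (c, a, b)" by (cases t)
  have "((\<lambda>s. c * w s ^ a / v s ^ b * heat_kernel (w s) (v s) +
      heat_poly_eval P (w s) (v s) * heat_kernel (w s) (v s)) has_real_derivative
      c * (w' * (real a * w s ^ (a - 1) / v s ^ b - w s ^ (a + 1) / v s ^ (b + 1))
        + v' * (- real b * w s ^ a / v s ^ (b + 1) + w s ^ (a + 2) / (2 * v s ^ (b + 2))
                - w s ^ a / (2 * v s ^ (b + 1)))) * heat_kernel (w s) (v s)
      + (w' * heat_poly_eval (heat_poly_dw P) (w s) (v s) + v' * heat_poly_eval (heat_poly_dv P) (w s) (v s))
        * heat_kernel (w s) (v s)) (at s)"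
    using v_pos
    by (intro DERIV_add Cons, auto intro!: derivative_eq_intros w v heat_kernel_has_derivative)
       (cases a; cases b; simp add: field_simps power2_eq_square)
  then show ?case
    by (simp add: t algebra_simps)
qed

lemma heat_poly_dv_dw_commute:
  assumes "v \<noteq> 0"
  shows "heat_poly_eval (heat_poly_dv (heat_poly_dw P)) w v = heat_poly_eval (heat_poly_dw (heat_poly_dv P)) w v"
proof (induction P)
  case Nil
  then show ?case by simp
next
  case (Cons t P)
  then show ?case
    using assms by (cases t; cases "fst (snd t)") (auto simp: field_simps power2_eq_square)
qed

text \<open>\<open>heat_poly_dw\<close> only depends on the function represented, since it represents a derivative.\<close>

lemma heat_poly_dw_cong:
  assumes v_pos: "v > 0" and eq: "\<And>w. heat_poly_eval P w v = c * heat_poly_eval Q w v"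
  shows "heat_poly_eval (heat_poly_dw P) w v = c * heat_poly_eval (heat_poly_dw Q) w v"
proof -
  have deriv_w: "((\<lambda>w. heat_poly_eval R w v * heat_kernel w v) has_real_derivative
      heat_poly_eval (heat_poly_dw R) w v * heat_kernel w v) (at w)" for R
    using heat_poly_kernel_has_derivative[of "\<lambda>w. w" 1 w "\<lambda>_. v" 0 R] v_pos
    by (auto intro!: derivative_eq_intros)
  have "((\<lambda>w. heat_poly_eval P w v * heat_kernel w v) has_real_derivative
      c * (heat_poly_eval (heat_poly_dw Q) w v * heat_kernel w v)) (at w)"
    using DERIV_cmult[OF deriv_w[of Q], of c] by (simp add: eq mult.assoc)
  then have "heat_poly_eval (heat_poly_dw P) w v * heat_kernel w v =
      c * heat_poly_eval (heat_poly_dw Q) w v * heat_kernel w v"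
    using DERIV_unique[OF deriv_w[of P]] by simp
  then show ?thesis
    using heat_kernel_pos[OF v_pos, of w] by simp
qed

definition heat_kernel_deriv_poly :: "nat \<Rightarrow> heat_poly" where
  "heat_kernel_deriv_poly k = (heat_poly_dw ^^ k) [(1, 0, 0)]"

lemma heat_kernel_deriv_poly_Suc:
  "heat_kernel_deriv_poly (Suc k) = heat_poly_dw (heat_kernel_deriv_poly k)"
  by (simp add: heat_kernel_deriv_poly_def)

lemma heat_kernel_deriv_poly_heat_equation:
  assumes v_pos: "v > 0"
  shows "heat_poly_eval (heat_poly_dv (heat_kernel_deriv_poly k)) w v =
    1 / 2 * heat_poly_eval (heat_poly_dw (heat_poly_dw (heat_kernel_deriv_poly k))) w v"
proof (induction k arbitrary: w)
  case 0
  then show ?case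
    using v_pos by (simp add: heat_kernel_deriv_poly_def field_simps power2_eq_square)
next
  case (Suc k)
  have "heat_poly_eval (heat_poly_dv (heat_kernel_deriv_poly (Suc k))) w v =
      heat_poly_eval (heat_poly_dw (heat_poly_dv (heat_kernel_deriv_poly k))) w v"
    using heat_poly_dv_dw_commute v_pos by (simp add: heat_kernel_deriv_poly_Suc)
  also have "\<dots> = 1 / 2 * heat_poly_eval (heat_poly_dw (heat_poly_dw (heat_kernel_deriv_poly (Suc k)))) w v"
    by (rule heat_poly_dw_cong[OF v_pos]) (simp add: Suc heat_kernel_deriv_poly_Suc)
  finally show ?case .
qed

definition gauss_deriv :: "real \<Rightarrow> real \<Rightarrow> real \<Rightarrow> nat \<Rightarrow> real \<Rightarrow> real \<Rightarrow> real" where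
  "gauss_deriv a0 T y k t = (deriv ^^ k) (\<lambda>z. G0 a0 t z T y)"

definition poly_times_gauss :: "real \<Rightarrow> real \<Rightarrow> real \<Rightarrow> heat_poly \<Rightarrow> real \<Rightarrow> real \<Rightarrow> real" where
  "poly_times_gauss a0 T y P t x =
     heat_poly_eval P (x - y - a0 * (T - t) / 2) (a0 * (T - t)) * heat_kernel (x - y - a0 * (T - t) / 2) (a0 * (T - t))"

lemma G0_eq_heat_kernel:
  "G0 a0 t x T y = heat_kernel (x - y - a0 * (T - t) / 2) (a0 * (T - t))"
proof -
  have "(y - x + a0 * (T - t) / 2)^2 = (x - y - a0 * (T - t) / 2)^2"
    by (simp add: power2_eq_square algebra_simps)
  then show ?thesis
    unfolding G0_def heat_kernel_def by (simp add: mult.assoc)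
qed

lemma poly_times_gauss_has_derivative_x:
  assumes "a0 > 0" "t < T"
  shows "((\<lambda>z. poly_times_gauss a0 T y P t z) has_real_derivative
    poly_times_gauss a0 T y (heat_poly_dw P) t x) (at x)"
proof -
  have "((\<lambda>z. z - y - a0 * (T - t) / 2) has_real_derivative 1) (at x)"
    by (auto intro!: derivative_eq_intros)
  from heat_poly_kernel_has_derivative[OF this DERIV_const, of "a0 * (T - t)" P] assms
  show ?thesis
    unfolding poly_times_gauss_def by simp
qed

lemma poly_times_gauss_has_derivative_t:
  assumes "a0 > 0" "t < T"
  shows "((\<lambda>s. poly_times_gauss a0 T y P s x) has_real_derivative
    a0 / 2 * poly_times_gauss a0 T y (heat_poly_dw P) t x - a0 * poly_times_gauss a0 T y (heat_poly_dv P) t x)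
    (at t)"
proof -
  have "((\<lambda>s. x - y - a0 * (T - s) / 2) has_real_derivative a0 / 2) (at t)"
    and "((\<lambda>s. a0 * (T - s)) has_real_derivative - a0) (at t)"
    by (auto intro!: derivative_eq_intros)
  from heat_poly_kernel_has_derivative[OF this, of P] assms
  show ?thesis
    unfolding poly_times_gauss_def by (simp add: algebra_simps)
qed

lemma gauss_deriv_eq_poly_times_gauss:
  assumes a0: "a0 > 0" and t: "t < T"
  shows "gauss_deriv a0 T y k t = poly_times_gauss a0 T y (heat_kernel_deriv_poly k) t"
proof (induction k)
  case 0
  show ?case
    by (simp add: gauss_deriv_def poly_times_gauss_def heat_kernel_deriv_poly_def G0_eq_heat_kernel fun_eq_iff)
next
  case (Suc k)
  have "gauss_deriv a0 T y (Suc k) t = deriv (poly_times_gauss a0 T y (heat_kernel_deriv_poly k) t)"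
    using Suc by (simp add: gauss_deriv_def)
  also have "\<dots> = poly_times_gauss a0 T y (heat_kernel_deriv_poly (Suc k)) t"
    using DERIV_imp_deriv[OF poly_times_gauss_has_derivative_x[OF a0 t]]
    by (simp add: heat_kernel_deriv_poly_Suc fun_eq_iff)
  finally show ?case .
qed

lemma gauss_deriv_has_derivative_x:
  assumes "a0 > 0" "t < T"
  shows "((\<lambda>z. gauss_deriv a0 T y k t z) has_real_derivative gauss_deriv a0 T y (Suc k) t x) (at x)"
  using poly_times_gauss_has_derivative_x[OF assms]
  by (simp add: gauss_deriv_eq_poly_times_gauss[OF assms] heat_kernel_deriv_poly_Suc)

lemma continuous_on_gauss_deriv:
  assumes "a0 > 0" "t < T"
  shows "continuous_on UNIV (gauss_deriv a0 T y k t)"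
  using gauss_deriv_has_derivative_x[OF assms] by (meson DERIV_isCont continuous_at_imp_continuous_on)

lemma gauss_deriv_has_derivative_t:
  assumes a0: "a0 > 0" and t: "t < T"
  shows "((\<lambda>s. gauss_deriv a0 T y k s x) has_real_derivative
     - a0 / 2 * (gauss_deriv a0 T y (k + 2) t x - gauss_deriv a0 T y (k + 1) t x)) (at t)"
proof -
  have "a0 * (T - t) > 0"
    using a0 t by simp
  then have heat: "a0 / 2 * poly_times_gauss a0 T y (heat_poly_dw (heat_kernel_deriv_poly k)) t x
      - a0 * poly_times_gauss a0 T y (heat_poly_dv (heat_kernel_deriv_poly k)) t x
      = - a0 / 2 * (gauss_deriv a0 T y (k + 2) t x - gauss_deriv a0 T y (k + 1) t x)"
    by (simp add: gauss_deriv_eq_poly_times_gauss[OF a0 t] heat_kernel_deriv_poly_Suc poly_times_gauss_def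
        heat_kernel_deriv_poly_heat_equation algebra_simps)
  have "((\<lambda>s. poly_times_gauss a0 T y (heat_kernel_deriv_poly k) s x) has_real_derivative
     - a0 / 2 * (gauss_deriv a0 T y (k + 2) t x - gauss_deriv a0 T y (k + 1) t x)) (at t)"
    using poly_times_gauss_has_derivative_t[OF a0 t, of y "heat_kernel_deriv_poly k" x] unfolding heat .
  then show ?thesis
    by (rule has_field_derivative_transform_within_open[where S = "{..<T}"])
       (use t a0 in \<open>auto simp: gauss_deriv_eq_poly_times_gauss\<close>)
qed

section \<open>Smooth functions with compact support\<close>

definition smooth :: "(real \<Rightarrow> real) \<Rightarrow> bool" where
  "smooth f \<longleftrightarrow> (\<forall>k x. ((deriv ^^ k) f) differentiable (at x))"

lemma smooth_has_derivative:
  "smooth f \<Longrightarrow> ((deriv ^^ k) f has_real_derivative (deriv ^^ Suc k) f x) (at x)"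
  unfolding smooth_def by (simp add: DERIV_deriv_iff_real_differentiable)

lemma smooth_continuous_on: "smooth f \<Longrightarrow> continuous_on UNIV ((deriv ^^ k) f)"
  using smooth_has_derivative by (meson DERIV_isCont continuous_at_imp_continuous_on)

lemma smooth_deriv: "smooth f \<Longrightarrow> smooth (deriv f)"
  unfolding smooth_def by (metis funpow_Suc_right o_apply)

lemma higher_deriv_linear_times:
  assumes f: "smooth f"
  shows "(deriv ^^ k) (\<lambda>x. (x - c) * f x) =
    (\<lambda>x. (x - c) * (deriv ^^ k) f x + real k * (deriv ^^ (k - 1)) f x)"
proof (induction k)
  case 0
  then show ?case by simp
next
  case (Suc k)
  have d: "((\<lambda>x. (x - c) * (deriv ^^ k) f x + real k * (deriv ^^ (k - 1)) f x) has_real_derivative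
     (x - c) * (deriv ^^ Suc k) f x + real (Suc k) * (deriv ^^ k) f x) (at x)" for x
  proof -
    have "((\<lambda>x. (x - c) * (deriv ^^ k) f x + real k * (deriv ^^ (k - 1)) f x) has_real_derivative
      ((x - c) * (deriv ^^ Suc k) f x + 1 * (deriv ^^ k) f x) + real k * (deriv ^^ Suc (k - 1)) f x) (at x)"
      by (intro DERIV_add DERIV_cmult DERIV_mult' smooth_has_derivative[OF f])
         (auto intro!: derivative_eq_intros)
    moreover have "real k * (deriv ^^ Suc (k - 1)) f x = real k * (deriv ^^ k) f x"
      by (cases k) auto
    ultimately show ?thesis
      by (metis (no_types, lifting) add.commute add.left_commute mult_1 of_nat_Suc distrib_right)
  qed
  have "(deriv ^^ Suc k) (\<lambda>x. (x - c) * f x) =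
      deriv (\<lambda>x. (x - c) * (deriv ^^ k) f x + real k * (deriv ^^ (k - 1)) f x)"
    using Suc by simp
  also have "\<dots> = (\<lambda>x. (x - c) * (deriv ^^ Suc k) f x + real (Suc k) * (deriv ^^ k) f x)"
    using DERIV_imp_deriv[OF d] by (simp add: fun_eq_iff)
  finally show ?case
    by simp
qed

lemma smooth_linear_times:
  assumes f: "smooth f"
  shows "smooth (\<lambda>x. (x - c) * f x)"
proof -
  have "(\<lambda>x. (x - c) * (deriv ^^ k) f x + real k * (deriv ^^ (k - 1)) f x) differentiable (at x)" for k x
    using f unfolding smooth_def by (intro derivative_intros) auto
  then show ?thesis
    by (simp add: smooth_def higher_deriv_linear_times[OF f])
qed

lemma smooth_power_times: "smooth f \<Longrightarrow> smooth (\<lambda>x. (x - c) ^ i * f x)"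
proof (induction i)
  case 0
  then show ?case by simp
next
  case (Suc i)
  then show ?case
    using smooth_linear_times[of "\<lambda>x. (x - c) ^ i * f x" c] by (simp add: mult.assoc)
qed

lemma deriv_eq_0_outside:
  fixes f :: "real \<Rightarrow> real"
  assumes "\<And>x. R < \<bar>x\<bar> \<Longrightarrow> f x = 0" "R < \<bar>x\<bar>"
  shows "deriv f x = 0"
proof -
  have "open {x::real. R < \<bar>x\<bar>}"
    by (intro open_Collect_less continuous_intros)
  then have "(f has_real_derivative 0) (at x)"
    by (rule has_field_derivative_transform_within_open[OF DERIV_const]) (use assms in auto)
  then show ?thesis
    by (rule DERIV_imp_deriv)
qed

lemma higher_deriv_eq_0_outside:
  fixes f :: "real \<Rightarrow> real"
  assumes "\<And>x. R < \<bar>x\<bar> \<Longrightarrow> f x = 0" "R < \<bar>x\<bar>"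
  shows "(deriv ^^ k) f x = 0"
  using assms(2)
proof (induction k arbitrary: x)
  case 0
  then show ?case using assms(1) by simp
next
  case (Suc k)
  then show ?case by (simp add: deriv_eq_0_outside[of R "(deriv ^^ k) f"])
qed

lemma indicator_times_eq_compact_support:
  fixes h :: "real \<Rightarrow> real"
  assumes "\<And>x. R < \<bar>x\<bar> \<Longrightarrow> h x = 0"
  shows "(\<lambda>x. indicator {-R..R} x * h x) = h"
  using assms by (force simp: fun_eq_iff indicator_def abs_le_iff)

lemma integrable_compact_support:
  fixes h :: "real \<Rightarrow> real"
  assumes "continuous_on UNIV h" and "\<And>x. R < \<bar>x\<bar> \<Longrightarrow> h x = 0"
  shows "integrable lborel h"
  using borel_integrable_compact[of "{-R..R}" h] assms
  by (simp add: indicator_times_eq_compact_support continuous_on_subset)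

lemma bounded_compact_support:
  fixes h :: "real \<Rightarrow> real"
  assumes h: "continuous_on UNIV h" and h_zero: "\<And>x. R < \<bar>x\<bar> \<Longrightarrow> h x = 0"
  obtains C where "\<And>x. \<bar>h x\<bar> \<le> C"
proof -
  have "compact (h ` {-R..R})"
    by (rule compact_continuous_image) (auto intro: continuous_on_subset[OF h])
  then obtain B where "\<forall>v\<in>h ` {-R..R}. norm v \<le> B"
    unfolding bounded_iff by (metis compact_imp_bounded bounded_iff)
  then have B: "\<And>x. x \<in> {-R..R} \<Longrightarrow> \<bar>h x\<bar> \<le> B"
    by auto
  have "\<bar>h x\<bar> \<le> \<bar>B\<bar>" for x
    using B[of x] h_zero[of x] by (cases "x \<in> {-R..R}") auto
  then show ?thesis
    using that by blast
qed

lemma integral_by_parts_compact_support: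
  fixes F f G g :: "real \<Rightarrow> real"
  assumes F: "\<And>x. (F has_real_derivative f x) (at x)" and f: "continuous_on UNIV f"
    and G: "\<And>x. (G has_real_derivative g x) (at x)" and g: "continuous_on UNIV g"
    and G_zero: "\<And>x. R < \<bar>x\<bar> \<Longrightarrow> G x = 0" and g_zero: "\<And>x. R < \<bar>x\<bar> \<Longrightarrow> g x = 0"
  shows "integrable lborel (\<lambda>x. F x * g x)" and "integrable lborel (\<lambda>x. f x * G x)"
    and "integral\<^sup>L lborel (\<lambda>x. F x * g x) = - integral\<^sup>L lborel (\<lambda>x. f x * G x)"
proof -
  define S where "S = \<bar>R\<bar> + 1"
  have F_cont: "continuous_on UNIV F" and G_cont: "continuous_on UNIV G"
    using F G by (meson DERIV_isCont continuous_at_imp_continuous_on)+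
  have Fg_zero: "\<And>x. S < \<bar>x\<bar> \<Longrightarrow> F x * g x = 0" and fG_zero: "\<And>x. S < \<bar>x\<bar> \<Longrightarrow> f x * G x = 0"
    using g_zero G_zero by (auto simp: S_def)
  show "integrable lborel (\<lambda>x. F x * g x)" "integrable lborel (\<lambda>x. f x * G x)"
    by (intro integrable_compact_support[where R = S] continuous_intros F_cont G_cont f g;
        use Fg_zero fG_zero in simp)+
  have "G S = 0" "G (- S) = 0"
    using G_zero by (auto simp: S_def)
  moreover have "S \<ge> - S"
    by (simp add: S_def)
  ultimately show "integral\<^sup>L lborel (\<lambda>x. F x * g x) = - integral\<^sup>L lborel (\<lambda>x. f x * G x)"
    using integral_by_parts'[of "- S" S f g F G] F G f g
    by (simp add: indicator_times_eq_compact_support[OF Fg_zero] indicator_times_eq_compact_support[OF fG_zero]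
        continuous_on_eq_continuous_at)
qed

section \<open>Integrals of derivatives of the Gaussian against test functions\<close>

lemma G0_eq_normal_density:
  assumes "a0 > 0" "t < T"
  shows "G0 a0 t x T y = normal_density (y + a0 * (T - t) / 2) (sqrt (a0 * (T - t))) x"
proof -
  have "(y - x + a0 * (T - t) / 2)^2 = (x - (y + a0 * (T - t) / 2))^2"
    by (simp add: power2_eq_square algebra_simps)
  then show ?thesis
    using assms unfolding G0_def normal_density_def by (simp add: mult.assoc)
qed

lemma G0_integral_bound:
  assumes a0: "a0 > 0" and t: "t < T" and h: "continuous_on UNIV h"
    and h_zero: "\<And>x. R < \<bar>x\<bar> \<Longrightarrow> h x = 0" and C: "\<And>x. \<bar>h x\<bar> \<le> C"
  shows "\<bar>integral\<^sup>L lborel (\<lambda>x. G0 a0 t x T y * h x)\<bar> \<le> C"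
proof -
  let ?N = "normal_density (y + a0 * (T - t) / 2) (sqrt (a0 * (T - t)))"
  have "continuous_on UNIV (\<lambda>x. G0 a0 t x T y)"
    using continuous_on_gauss_deriv[OF a0 t, of y 0] by (simp add: gauss_deriv_def)
  then have "integrable lborel (\<lambda>x. G0 a0 t x T y * h x)"
    by (intro integrable_compact_support[of _ R] continuous_intros h) (use h_zero in auto)
  moreover have "integrable lborel (\<lambda>x. C * ?N x)"
    using a0 t by (auto intro!: integrable_mult_right integrable_normal_density)
  moreover have "\<bar>G0 a0 t x T y * h x\<bar> \<le> C * ?N x" for x
    using mult_left_mono[OF C[of x], of "?N x"]
    by (simp add: G0_eq_normal_density[OF a0 t] abs_mult mult.commute)
  ultimately have "\<bar>integral\<^sup>L lborel (\<lambda>x. G0 a0 t x T y * h x)\<bar> \<le> integral\<^sup>L lborel (\<lambda>x. C * ?N x)"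
    by (intro integral_abs_bound_integral) auto
  also have "\<dots> = C"
    using a0 t by simp
  finally show ?thesis .
qed

lemma gauss_deriv_integral_by_parts:
  assumes a0: "a0 > 0" and t: "t < T"
  assumes "smooth \<psi>" and "\<And>x. R < \<bar>x\<bar> \<Longrightarrow> \<psi> x = 0"
  shows "integrable lborel (\<lambda>x. gauss_deriv a0 T y k t x * \<psi> x) \<and>
    integral\<^sup>L lborel (\<lambda>x. gauss_deriv a0 T y k t x * \<psi> x) =
      (-1) ^ k * integral\<^sup>L lborel (\<lambda>x. G0 a0 t x T y * (deriv ^^ k) \<psi> x)"
  using assms(3,4)
proof (induction k arbitrary: \<psi>)
  case 0
  then show ?case
    using continuous_on_gauss_deriv[OF a0 t, of y 0] smooth_continuous_on[of \<psi> 0]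
    by (auto intro!: integrable_compact_support[of _ R] continuous_intros simp: gauss_deriv_def)
next
  case (Suc k)
  have \<psi>': "(\<psi> has_real_derivative deriv \<psi> x) (at x)" for x
    using smooth_has_derivative[OF Suc.prems(1), of 0] by simp
  have \<psi>'_zero: "\<And>x. R < \<bar>x\<bar> \<Longrightarrow> deriv \<psi> x = 0"
    by (rule deriv_eq_0_outside[OF Suc.prems(2)])
  note parts = integral_by_parts_compact_support[OF gauss_deriv_has_derivative_x[OF a0 t]
      continuous_on_gauss_deriv[OF a0 t] \<psi>' smooth_continuous_on[OF Suc.prems(1), of 1, simplified]
      Suc.prems(2) \<psi>'_zero]
  have "(deriv ^^ k) (deriv \<psi>) = (deriv ^^ Suc k) \<psi>"
    by (simp add: funpow_Suc_right del: funpow.simps)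
  then show ?case
    using parts Suc.IH[OF smooth_deriv[OF Suc.prems(1)] \<psi>'_zero] by simp
qed

text \<open>Integration by parts moves all derivatives onto the test function, and \<open>G\<^sup>0(t, \<cdot>)\<close> is a
  probability density; so the bound is uniform in \<open>t\<close>.\<close>

lemma gauss_deriv_integral_bounded:
  assumes a0: "a0 > 0" and \<psi>: "smooth \<psi>" and \<psi>_zero: "\<And>x. R < \<bar>x\<bar> \<Longrightarrow> \<psi> x = 0"
  obtains C where "\<And>t. t < T \<Longrightarrow> \<bar>integral\<^sup>L lborel (\<lambda>x. gauss_deriv a0 T y k t x * \<psi> x)\<bar> \<le> C"
proof -
  have \<psi>k_zero: "\<And>x. R < \<bar>x\<bar> \<Longrightarrow> (deriv ^^ k) \<psi> x = 0"
    by (rule higher_deriv_eq_0_outside[OF \<psi>_zero])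
  obtain C where C: "\<And>x. \<bar>(deriv ^^ k) \<psi> x\<bar> \<le> C"
    using bounded_compact_support[OF smooth_continuous_on[OF \<psi>] \<psi>k_zero] by blast
  have "\<bar>integral\<^sup>L lborel (\<lambda>x. gauss_deriv a0 T y k t x * \<psi> x)\<bar> \<le> C" if t: "t < T" for t
    using gauss_deriv_integral_by_parts[where R = R and y = y and k = k, OF a0 t \<psi> \<psi>_zero]
      G0_integral_bound[where R = R and y = y, OF a0 t smooth_continuous_on[OF \<psi>] \<psi>k_zero C]
    by (simp add: abs_mult)
  then show ?thesis
    using that by blast
qed

lemma tendsto_power_times_gauss_deriv_integral:
  assumes a0: "a0 > 0" and p: "p > 0" and \<psi>: "smooth \<psi>" and \<psi>_zero: "\<And>x. R < \<bar>x\<bar> \<Longrightarrow> \<psi> x = 0"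
  shows "((\<lambda>t. (T - t) ^ p * integral\<^sup>L lborel (\<lambda>x. gauss_deriv a0 T y k t x * \<psi> x)) \<longlongrightarrow> 0) (at_left T)"
proof -
  obtain C where C: "\<And>t. t < T \<Longrightarrow> \<bar>integral\<^sup>L lborel (\<lambda>x. gauss_deriv a0 T y k t x * \<psi> x)\<bar> \<le> C"
    using gauss_deriv_integral_bounded[OF a0 \<psi> \<psi>_zero] by blast
  have "norm ((T - t) ^ p * integral\<^sup>L lborel (\<lambda>x. gauss_deriv a0 T y k t x * \<psi> x)) \<le> (T - t) ^ p * C"
    if "t < T" for t
    using that C[OF that] by (simp add: abs_mult mult_left_mono)
  then have "\<forall>\<^sub>F t in at_left T.
      norm ((T - t) ^ p * integral\<^sup>L lborel (\<lambda>x. gauss_deriv a0 T y k t x * \<psi> x)) \<le> (T - t) ^ p * C"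
    using eventually_at_left_real[of "T - 1" T] by (auto elim!: eventually_mono)
  moreover have "((\<lambda>t. (T - t) ^ p * C) \<longlongrightarrow> 0) (at_left T)"
    using p by (auto intro!: tendsto_eq_intros)
  ultimately show ?thesis
    by (rule Lim_null_comparison)
qed

section \<open>Formal expansions in powers of \<open>x - xbar\<close> and \<open>T - t\<close>\<close>

text \<open>A term \<open>(c, i, p, k)\<close> stands for \<open>c(\<alpha>) (x - xbar)\<^sup>i \<tau>\<^sup>p D\<^sub>k\<close>, where \<open>\<tau> = T - t\<close> and
  \<open>D\<^sub>k = \<partial>\<^sub>x\<^sup>k G\<^sup>0\<close>; in the paper's indexing by powers of \<open>\<surd>(T - t)\<close> it has \<open>j = 2p\<close>.
  The operations below act on lists of terms as the corresponding differential operators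
  act on the functions they stand for.\<close>

type_synonym exp_term = "((nat \<Rightarrow> real) \<Rightarrow> real) \<times> nat \<times> nat \<times> nat"

definition terms_val :: "(nat \<Rightarrow> real) \<Rightarrow> real \<Rightarrow> real \<Rightarrow> (nat \<Rightarrow> real) \<Rightarrow> exp_term list \<Rightarrow> real \<Rightarrow> real" where
  "terms_val \<alpha> xbar \<tau> D es x = (\<Sum>(c, i, p, k)\<leftarrow>es. c \<alpha> * (x - xbar) ^ i * \<tau> ^ p * D k)"

definition dx_terms :: "exp_term list \<Rightarrow> exp_term list" where
  "dx_terms es = concat (map (\<lambda>(c, i, p, k). [(\<lambda>\<alpha>. real i * c \<alpha>, i - 1, p, k), (c, i, p, Suc k)]) es)"

definition dt_terms :: "exp_term list \<Rightarrow> exp_term list" where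
  "dt_terms es = concat (map (\<lambda>(c, i, p, k).
     [(\<lambda>\<alpha>. - real p * c \<alpha>, i, p - 1, k), (\<lambda>\<alpha>. - \<alpha> 0 / 2 * c \<alpha>, i, p, k + 2),
      (\<lambda>\<alpha>. \<alpha> 0 / 2 * c \<alpha>, i, p, k + 1)]) es)"

definition scale_terms :: "((nat \<Rightarrow> real) \<Rightarrow> real) \<Rightarrow> exp_term list \<Rightarrow> exp_term list" where
  "scale_terms q es = map (\<lambda>(c, i, p, k). (\<lambda>\<alpha>. q \<alpha> * c \<alpha>, i, p, k)) es"

definition shift_terms :: "nat \<Rightarrow> exp_term list \<Rightarrow> exp_term list" where
  "shift_terms h es = map (\<lambda>(c, i, p, k). (c, i + h, p, k)) es"

definition Lxx_terms :: "exp_term list \<Rightarrow> exp_term list" where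
  "Lxx_terms es = dx_terms (dx_terms es) @ scale_terms (\<lambda>_. -1) (dx_terms es)"

definition L0_terms :: "exp_term list \<Rightarrow> exp_term list" where
  "L0_terms es = scale_terms (\<lambda>\<alpha>. \<alpha> 0 / 2) (Lxx_terms es) @ dt_terms es"

lemma terms_ops_simps [simp]:
  "dx_terms [] = []"
  "dx_terms ((c, i, p, k) # es) = [(\<lambda>\<alpha>. real i * c \<alpha>, i - 1, p, k), (c, i, p, Suc k)] @ dx_terms es"
  "dx_terms (es @ fs) = dx_terms es @ dx_terms fs"
  "dt_terms [] = []"
  "dt_terms ((c, i, p, k) # es) =
     [(\<lambda>\<alpha>. - real p * c \<alpha>, i, p - 1, k), (\<lambda>\<alpha>. - \<alpha> 0 / 2 * c \<alpha>, i, p, k + 2),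
      (\<lambda>\<alpha>. \<alpha> 0 / 2 * c \<alpha>, i, p, k + 1)] @ dt_terms es"
  "dt_terms (es @ fs) = dt_terms es @ dt_terms fs"
  "scale_terms q [] = []"
  "scale_terms q ((c, i, p, k) # es) = (\<lambda>\<alpha>. q \<alpha> * c \<alpha>, i, p, k) # scale_terms q es"
  "scale_terms q (es @ fs) = scale_terms q es @ scale_terms q fs"
  "shift_terms h [] = []"
  "shift_terms h ((c, i, p, k) # es) = (c, i + h, p, k) # shift_terms h es"
  by (simp_all add: dx_terms_def dt_terms_def scale_terms_def shift_terms_def)

lemma terms_val_simps [simp]:
  "terms_val \<alpha> xbar \<tau> D [] x = 0"
  "terms_val \<alpha> xbar \<tau> D ((c, i, p, k) # es) x = c \<alpha> * (x - xbar) ^ i * \<tau> ^ p * D k + terms_val \<alpha> xbar \<tau> D es x"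
  "terms_val \<alpha> xbar \<tau> D (es @ fs) x = terms_val \<alpha> xbar \<tau> D es x + terms_val \<alpha> xbar \<tau> D fs x"
  by (simp_all add: terms_val_def)

lemma terms_val_scale_terms [simp]:
  "terms_val \<alpha> xbar \<tau> D (scale_terms q es) x = q \<alpha> * terms_val \<alpha> xbar \<tau> D es x"
  "terms_val \<alpha> xbar \<tau> D (dx_terms (scale_terms q es)) x = q \<alpha> * terms_val \<alpha> xbar \<tau> D (dx_terms es) x"
  "terms_val \<alpha> xbar \<tau> D (dt_terms (scale_terms q es)) x = q \<alpha> * terms_val \<alpha> xbar \<tau> D (dt_terms es) x"
  "terms_val \<alpha> xbar \<tau> D (dx_terms (dx_terms (scale_terms q es))) x =
     q \<alpha> * terms_val \<alpha> xbar \<tau> D (dx_terms (dx_terms es)) x"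
  by (induction es) (auto simp: algebra_simps)

lemma terms_val_shift_terms [simp]:
  "terms_val \<alpha> xbar \<tau> D (shift_terms h es) x = (x - xbar) ^ h * terms_val \<alpha> xbar \<tau> D es x"
  by (induction es) (auto simp: algebra_simps power_add)

lemma terms_val_L0_terms [simp]:
  "terms_val \<alpha> xbar \<tau> D (L0_terms []) x = 0"
  "terms_val \<alpha> xbar \<tau> D (L0_terms (es @ fs)) x =
     terms_val \<alpha> xbar \<tau> D (L0_terms es) x + terms_val \<alpha> xbar \<tau> D (L0_terms fs) x"
  "terms_val \<alpha> xbar \<tau> D (L0_terms (scale_terms q es)) x = q \<alpha> * terms_val \<alpha> xbar \<tau> D (L0_terms es) x"
  by (simp_all add: L0_terms_def Lxx_terms_def algebra_simps)

lemma terms_val_L0_terms_single: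
  "terms_val \<alpha> xbar \<tau> D (L0_terms [(c, i, Suc p, k)]) x =
     c \<alpha> * (\<alpha> 0 / 2 * \<tau> ^ Suc p *
       (real i * real (i - 1) * (x - xbar) ^ (i - 2) * D k + 2 * real i * (x - xbar) ^ (i - 1) * D (Suc k)
        - real i * (x - xbar) ^ (i - 1) * D k)
     - real (Suc p) * (x - xbar) ^ i * \<tau> ^ p * D k)"
  by (cases i) (simp_all add: L0_terms_def Lxx_terms_def algebra_simps)

text \<open>By \<open>terms_val_L0_terms_single\<close>, \<open>L\<^sub>0\<close> maps the leading term to the target monomial plus terms of
  lower degree in \<open>x - xbar\<close>; these are cancelled recursively.\<close>

fun L0_inverse :: "nat \<Rightarrow> nat \<Rightarrow> nat \<Rightarrow> exp_term list" where
  "L0_inverse 0 p k = [(\<lambda>_. -1 / real (Suc p), 0, Suc p, k)]"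
| "L0_inverse (Suc 0) p k = [(\<lambda>_. -1 / real (Suc p), 1, Suc p, k)]
     @ scale_terms (\<lambda>\<alpha>. 1 / real (Suc p) * \<alpha> 0) (L0_inverse 0 (Suc p) (Suc k))
     @ scale_terms (\<lambda>\<alpha>. - 1 / (2 * real (Suc p)) * \<alpha> 0) (L0_inverse 0 (Suc p) k)"
| "L0_inverse (Suc (Suc i)) p k = [(\<lambda>_. -1 / real (Suc p), Suc (Suc i), Suc p, k)]
     @ scale_terms (\<lambda>\<alpha>. real (Suc (Suc i)) / real (Suc p) * \<alpha> 0) (L0_inverse (Suc i) (Suc p) (Suc k))
     @ scale_terms (\<lambda>\<alpha>. - real (Suc (Suc i)) / (2 * real (Suc p)) * \<alpha> 0) (L0_inverse (Suc i) (Suc p) k)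
     @ scale_terms (\<lambda>\<alpha>. real (Suc (Suc i)) * real (Suc i) / (2 * real (Suc p)) * \<alpha> 0) (L0_inverse i (Suc p) k)"

lemma terms_val_L0_inverse:
  "terms_val \<alpha> xbar \<tau> D (L0_terms (L0_inverse i p k)) x = (x - xbar) ^ i * \<tau> ^ p * D k"
proof (induction i p k rule: L0_inverse.induct)
  case (1 p k)
  have "real (Suc p) \<noteq> 0"
    by simp
  then show ?case
    by (simp add: terms_val_L0_terms_single)
next
  case (2 p k)
  define r where "r = real (Suc p)"
  have "r \<noteq> 0"
    by (simp add: r_def)
  then show ?case
    by (simp only: L0_inverse.simps(2) terms_val_L0_terms 2 terms_val_L0_terms_single flip: r_def)
       (simp add: field_simps)
next
  case (3 i p k)
  define r where "r = real (Suc p)"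
  have "r \<noteq> 0"
    by (simp add: r_def)
  then show ?case
    by (simp only: L0_inverse.simps(3) terms_val_L0_terms 3 terms_val_L0_terms_single flip: r_def)
       (simp add: field_simps)
qed

definition L0_inverse_terms :: "exp_term list \<Rightarrow> exp_term list" where
  "L0_inverse_terms es = concat (map (\<lambda>(c, i, p, k). scale_terms c (L0_inverse i p k)) es)"

lemma terms_val_L0_inverse_terms:
  "terms_val \<alpha> xbar \<tau> D (L0_terms (L0_inverse_terms es)) x = terms_val \<alpha> xbar \<tau> D es x"
  by (induction es) (auto simp: L0_inverse_terms_def terms_val_L0_inverse)

text \<open>The terms of \<open>G\<^sup>m\<close>: solve \<open>L\<^sub>0 G\<^sup>m = - \<Sum>\<^sub>h \<alpha>\<^sub>h (x - xbar)\<^sup>h (\<partial>\<^sub>x\<^sub>x - \<partial>\<^sub>x) G\<^sup>m\<^sup>-\<^sup>h\<close> formally.\<close>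

fun expansion_terms :: "nat \<Rightarrow> exp_term list" where
  "expansion_terms m = (if m = 0 then [(\<lambda>_. 1, 0, 0, 0)]
     else L0_inverse_terms (concat (map (\<lambda>h. scale_terms (\<lambda>\<alpha>. - \<alpha> h)
       (shift_terms h (Lxx_terms (expansion_terms (m - h))))) [1..<Suc m])))"

declare expansion_terms.simps [simp del]

lemma expansion_terms_0: "expansion_terms 0 = [(\<lambda>_. 1, 0, 0, 0)]"
  by (simp add: expansion_terms.simps)

lemma terms_val_L0_expansion_terms:
  assumes "m \<ge> 1"
  shows "terms_val \<alpha> xbar \<tau> D (L0_terms (expansion_terms m)) x =
    (\<Sum>h = 1..m. - \<alpha> h * (x - xbar) ^ h * terms_val \<alpha> xbar \<tau> D (Lxx_terms (expansion_terms (m - h))) x)"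
proof -
  have concat_val: "terms_val \<alpha> xbar \<tau> D (concat (map f hs)) x = (\<Sum>h\<leftarrow>hs. terms_val \<alpha> xbar \<tau> D (f h) x)"
    for f :: "nat \<Rightarrow> exp_term list" and hs
    by (induction hs) auto
  show ?thesis
    using assms
    by (subst expansion_terms.simps)
       (simp add: terms_val_L0_inverse_terms concat_val sum_list_distinct_conv_sum_set
         atLeastLessThanSuc_atLeastAtMost mult.assoc del: upt_Suc)
qed

section \<open>Index bounds and polynomial coefficients\<close>

lemma mem_scale_terms: "(c, i, p, k) \<in> set (scale_terms q es) \<Longrightarrow> \<exists>c'. (c', i, p, k) \<in> set es"
  by (auto simp: scale_terms_def)

lemma mem_shift_terms:
  "(c, i, p, k) \<in> set (shift_terms h es) \<Longrightarrow> \<exists>c' i'. (c', i', p, k) \<in> set es \<and> i = i' + h"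
  by (auto simp: shift_terms_def)

lemma mem_dx_terms:
  "(c, i, p, k) \<in> set (dx_terms es) \<Longrightarrow>
    \<exists>c' i' k'. (c', i', p, k') \<in> set es \<and> i \<le> i' \<and> k' \<le> k \<and> k \<le> k' + 1 \<and> i' + k \<le> i + k' + 1"
  by (auto simp: dx_terms_def) force+

lemma mem_Lxx_terms:
  assumes "(c, i, p, k) \<in> set (Lxx_terms es)"
  shows "\<exists>c' i' k'. (c', i', p, k') \<in> set es \<and> i \<le> i' \<and> k' \<le> k \<and> k \<le> k' + 2 \<and> i' + k \<le> i + k' + 2"
proof -
  consider "(c, i, p, k) \<in> set (dx_terms (dx_terms es))" | c' where "(c', i, p, k) \<in> set (dx_terms es)"
    using assms by (auto simp: Lxx_terms_def dest: mem_scale_terms)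
  then show ?thesis
  proof cases
    case 1
    then obtain c1 i1 k1 where "(c1, i1, p, k1) \<in> set (dx_terms es)"
      and "i \<le> i1" "k1 \<le> k" "k \<le> k1 + 1" "i1 + k \<le> i + k1 + 1"
      using mem_dx_terms by blast
    moreover from this(1) obtain c2 i2 k2 where "(c2, i2, p, k2) \<in> set es"
      and "i1 \<le> i2" "k2 \<le> k1" "k1 \<le> k2 + 1" "i2 + k1 \<le> i1 + k2 + 1"
      using mem_dx_terms by blast
    ultimately show ?thesis
      by (intro exI[of _ c2] exI[of _ i2] exI[of _ k2]) auto
  next
    case 2
    then obtain c1 i1 k1 where "(c1, i1, p, k1) \<in> set es"
      and "i \<le> i1" "k1 \<le> k" "k \<le> k1 + 1" "i1 + k \<le> i + k1 + 1"
      using mem_dx_terms by blast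
    then show ?thesis
      by (intro exI[of _ c1] exI[of _ i1] exI[of _ k1]) auto
  qed
qed

lemma L0_inverse_indices:
  "(c', i', p', k') \<in> set (L0_inverse i p k) \<Longrightarrow>
     i' \<le> i \<and> p < p' \<and> p' \<le> p + i + 1 \<and> k \<le> k' \<and> k' \<le> k + i \<and> i + 2 * p + k' + 2 \<le> i' + 2 * p' + k"
proof (induction i p k arbitrary: c' i' p' k' rule: L0_inverse.induct)
  case (1 p k)
  then show ?case by auto
next
  case (2 p k)
  then show ?case by (auto simp: scale_terms_def)
next
  case (3 i p k)
  from 3(4) show ?case
    by (auto simp: scale_terms_def dest!: 3(1)[simplified] 3(2)[simplified] 3(3)[simplified])
qed

lemma mem_L0_inverse_terms:
  "(c, i, p, k) \<in> set (L0_inverse_terms es) \<Longrightarrow>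
    \<exists>c' i' p' k' c''. (c', i', p', k') \<in> set es \<and> (c'', i, p, k) \<in> set (L0_inverse i' p' k')"
  by (auto simp: L0_inverse_terms_def dest!: mem_scale_terms) blast

lemma mult_add_self_gap:
  fixes m m' c :: nat
  assumes "m' < m"
  shows "m' * (m' + c) + 2 * m + c \<le> m * (m + c) + 1"
proof -
  obtain n where m: "m = Suc n" and "m' \<le> n"
    using assms by (cases m) auto
  then have "m' * (m' + c) \<le> n * (n + c)"
    by (intro mult_le_mono) auto
  then show ?thesis
    by (simp add: m algebra_simps)
qed

text \<open>In the paper's indexing \<open>j = 2p\<close>, these are the bounds defining \<open>idx m\<close>.\<close>

lemma expansion_terms_indices:
  "(c, i, p, k) \<in> set (expansion_terms m) \<Longrightarrow>
     i \<le> m \<and> 2 * p \<le> m * (m + 3) \<and> 2 * k \<le> m * (m + 5) \<and> m + k \<le> i + 2 * p \<and> (m \<ge> 1 \<longrightarrow> p \<ge> 1)"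
proof (induction m arbitrary: c i p k rule: less_induct)
  case (less m)
  show ?case
  proof (cases "m = 0")
    case True
    then show ?thesis
      using less.prems by (simp add: expansion_terms_0)
  next
    case False
    obtain c1 i1 p1 k1 c' where
      e1: "(c1, i1, p1, k1) \<in> set (concat (map (\<lambda>h. scale_terms (\<lambda>\<alpha>. - \<alpha> h)
        (shift_terms h (Lxx_terms (expansion_terms (m - h))))) [1..<Suc m]))"
      and e: "(c', i, p, k) \<in> set (L0_inverse i1 p1 k1)"
      using less.prems False by (subst (asm) expansion_terms.simps) (auto dest!: mem_L0_inverse_terms)
    then obtain h where h: "1 \<le> h" "h \<le> m"
      and e1: "(c1, i1, p1, k1) \<in> set (scale_terms (\<lambda>\<alpha>. - \<alpha> h) (shift_terms h (Lxx_terms (expansion_terms (m - h)))))"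
      by auto
    obtain c2 i2 where e2: "(c2, i2, p1, k1) \<in> set (Lxx_terms (expansion_terms (m - h)))"
      and i1: "i1 = i2 + h"
      using mem_scale_terms[OF e1] mem_shift_terms by blast
    obtain c3 i3 k3 where e3: "(c3, i3, p1, k3) \<in> set (expansion_terms (m - h))"
      and Lxx: "i2 \<le> i3" "k3 \<le> k1" "k1 \<le> k3 + 2" "i3 + k1 \<le> i2 + k3 + 2"
      using mem_Lxx_terms[OF e2] by blast
    have lt: "m - h < m"
      using h False by simp
    from less.IH[OF lt e3] have IH: "i3 \<le> m - h" "2 * p1 \<le> (m - h) * (m - h + 3)"
      "2 * k3 \<le> (m - h) * (m - h + 5)" "m - h + k3 \<le> i3 + 2 * p1"
      by auto
    from L0_inverse_indices[OF e] have inv: "i \<le> i1" "p1 < p" "p \<le> p1 + i1 + 1" "k1 \<le> k" "k \<le> k1 + i1"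
      "i1 + 2 * p1 + k + 2 \<le> i + 2 * p + k1"
      by auto
    have gap3: "(m - h) * (m - h + 3) + 2 * m + 3 \<le> m * (m + 3) + 1"
      and gap5: "(m - h) * (m - h + 5) + 2 * m + 5 \<le> m * (m + 5) + 1"
      using mult_add_self_gap[OF lt] by auto
    show ?thesis
      using Lxx IH inv i1 h gap3 gap5 by linarith
  qed
qed

definition poly_coeffs :: "nat \<Rightarrow> exp_term list \<Rightarrow> bool" where
  "poly_coeffs n es \<longleftrightarrow> (\<forall>e\<in>set es. fst e \<in> poly_fun n)"

lemma poly_coeffs_simps [simp]:
  "poly_coeffs n []"
  "poly_coeffs n (e # es) \<longleftrightarrow> fst e \<in> poly_fun n \<and> poly_coeffs n es"
  "poly_coeffs n (es @ fs) \<longleftrightarrow> poly_coeffs n es \<and> poly_coeffs n fs"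
  "poly_coeffs n (concat (map f hs)) \<longleftrightarrow> (\<forall>h\<in>set hs. poly_coeffs n (f h))"
  by (auto simp: poly_coeffs_def)

lemma poly_fun_mono: "p \<in> poly_fun m \<Longrightarrow> m \<le> m' \<Longrightarrow> p \<in> poly_fun m'"
  by (induction rule: poly_fun.induct) (auto intro: poly_fun.intros)

lemma poly_fun_cmult: "p \<in> poly_fun n \<Longrightarrow> (\<lambda>\<alpha>. c * p \<alpha>) \<in> poly_fun n"
  by (rule poly_fun.mult[OF poly_fun.const])

lemma poly_fun_uminus: "p \<in> poly_fun n \<Longrightarrow> (\<lambda>\<alpha>. - p \<alpha>) \<in> poly_fun n"
  using poly_fun_cmult[of p n "-1"] by simp

lemma poly_coeffs_mono: "poly_coeffs m es \<Longrightarrow> m \<le> m' \<Longrightarrow> poly_coeffs m' es"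
  by (auto simp: poly_coeffs_def intro: poly_fun_mono)

lemma poly_coeffs_scale_terms:
  assumes "q \<in> poly_fun n" and "poly_coeffs n es"
  shows "poly_coeffs n (scale_terms q es)"
  using assms(2) by (induction es) (auto simp: scale_terms_def intro: poly_fun.mult[OF assms(1)])

lemma poly_coeffs_shift_terms: "poly_coeffs n es \<Longrightarrow> poly_coeffs n (shift_terms h es)"
  by (auto simp: poly_coeffs_def shift_terms_def)

lemma poly_coeffs_dx_terms: "poly_coeffs n es \<Longrightarrow> poly_coeffs n (dx_terms es)"
  by (induction es) (auto simp: dx_terms_def intro: poly_fun_cmult)

lemma poly_coeffs_Lxx_terms: "poly_coeffs n es \<Longrightarrow> poly_coeffs n (Lxx_terms es)"
  by (auto simp: Lxx_terms_def intro!: poly_coeffs_dx_terms poly_coeffs_scale_terms poly_fun.const)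

lemma poly_coeffs_L0_inverse: "poly_coeffs n (L0_inverse i p k)"
  by (induction i p k rule: L0_inverse.induct)
     (simp only: L0_inverse.simps poly_coeffs_simps fst_conv,
      intro conjI TrueI poly_fun.const poly_coeffs_scale_terms poly_fun_cmult poly_fun.var; simp)+

lemma poly_coeffs_L0_inverse_terms: "poly_coeffs n es \<Longrightarrow> poly_coeffs n (L0_inverse_terms es)"
  by (induction es)
     (auto simp: L0_inverse_terms_def intro!: poly_coeffs_scale_terms poly_coeffs_L0_inverse)

lemma poly_coeffs_expansion_terms: "poly_coeffs m (expansion_terms m)"
proof (induction m rule: less_induct)
  case (less m)
  show ?case
  proof (cases "m = 0")
    case True
    then show ?thesis
      by (simp add: expansion_terms_0 poly_fun.const)
  next
    case False
    have "poly_coeffs m (scale_terms (\<lambda>\<alpha>. - \<alpha> h) (shift_terms h (Lxx_terms (expansion_terms (m - h)))))"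
      if "h \<in> set [1..<Suc m]" for h
      using that False less.IH[of "m - h"]
      by (auto intro!: poly_coeffs_scale_terms poly_fun_uminus poly_fun.var poly_coeffs_shift_terms
          poly_coeffs_Lxx_terms intro: poly_coeffs_mono)
    then show ?thesis
      using False by (subst expansion_terms.simps) (simp add: poly_coeffs_L0_inverse_terms del: upt_Suc)
  qed
qed

section \<open>Expansions as functions of \<open>(t, x)\<close>\<close>

definition terms_gauss :: "(nat \<Rightarrow> real) \<Rightarrow> real \<Rightarrow> real \<Rightarrow> real \<Rightarrow> exp_term list \<Rightarrow> real \<Rightarrow> real \<Rightarrow> real" where
  "terms_gauss \<alpha> xbar T y es t x = terms_val \<alpha> xbar (T - t) (\<lambda>k. gauss_deriv (\<alpha> 0) T y k t x) es x"

lemma terms_gauss_simps [simp]: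
  "terms_gauss \<alpha> xbar T y [] t x = 0"
  "terms_gauss \<alpha> xbar T y ((c, i, p, k) # es) t x =
     c \<alpha> * (x - xbar) ^ i * (T - t) ^ p * gauss_deriv (\<alpha> 0) T y k t x + terms_gauss \<alpha> xbar T y es t x"
  by (simp_all add: terms_gauss_def)

lemma terms_gauss_has_derivative_x:
  assumes a0: "\<alpha> 0 > 0" and t: "t < T"
  shows "((\<lambda>z. terms_gauss \<alpha> xbar T y es t z) has_real_derivative terms_gauss \<alpha> xbar T y (dx_terms es) t x) (at x)"
proof (induction es)
  case Nil
  then show ?case by simp
next
  case (Cons e es)
  obtain c i p k where e: "e = (c, i, p, k)"
    by (cases e)
  have "((\<lambda>z. (z - xbar) ^ i) has_real_derivative real i * (x - xbar) ^ (i - 1)) (at x)"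
    by (auto intro!: derivative_eq_intros)
  then have "((\<lambda>z. c \<alpha> * (T - t) ^ p * ((z - xbar) ^ i * gauss_deriv (\<alpha> 0) T y k t z)
      + terms_gauss \<alpha> xbar T y es t z) has_real_derivative
      c \<alpha> * (T - t) ^ p * ((x - xbar) ^ i * gauss_deriv (\<alpha> 0) T y (Suc k) t x
        + real i * (x - xbar) ^ (i - 1) * gauss_deriv (\<alpha> 0) T y k t x)
      + terms_gauss \<alpha> xbar T y (dx_terms es) t x) (at x)"
    by (intro DERIV_add DERIV_cmult DERIV_mult' gauss_deriv_has_derivative_x a0 t Cons)
  then show ?case
    by (simp add: e algebra_simps)
qed

lemma terms_gauss_has_derivative_t:
  assumes a0: "\<alpha> 0 > 0" and t: "t < T"
  shows "((\<lambda>s. terms_gauss \<alpha> xbar T y es s x) has_real_derivative terms_gauss \<alpha> xbar T y (dt_terms es) t x) (at t)"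
proof (induction es)
  case Nil
  then show ?case by simp
next
  case (Cons e es)
  obtain c i p k where e: "e = (c, i, p, k)"
    by (cases e)
  have "((\<lambda>s. (T - s) ^ p) has_real_derivative - real p * (T - t) ^ (p - 1)) (at t)"
    by (auto intro!: derivative_eq_intros)
  then have "((\<lambda>s. c \<alpha> * (x - xbar) ^ i * ((T - s) ^ p * gauss_deriv (\<alpha> 0) T y k s x)
      + terms_gauss \<alpha> xbar T y es s x) has_real_derivative
      c \<alpha> * (x - xbar) ^ i * ((T - t) ^ p * (- \<alpha> 0 / 2 *
          (gauss_deriv (\<alpha> 0) T y (k + 2) t x - gauss_deriv (\<alpha> 0) T y (k + 1) t x))
        + - real p * (T - t) ^ (p - 1) * gauss_deriv (\<alpha> 0) T y k t x)
      + terms_gauss \<alpha> xbar T y (dt_terms es) t x) (at t)"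
    by (intro DERIV_add DERIV_cmult DERIV_mult' gauss_deriv_has_derivative_t a0 t Cons)
  then show ?case
    by (simp add: e algebra_simps)
qed

lemma deriv_terms_gauss_x:
  assumes "\<alpha> 0 > 0" and "t < T"
  shows "deriv (\<lambda>z. terms_gauss \<alpha> xbar T y es t z) = (\<lambda>z. terms_gauss \<alpha> xbar T y (dx_terms es) t z)"
  using DERIV_imp_deriv[OF terms_gauss_has_derivative_x[where \<alpha> = \<alpha>, OF assms]] by (simp add: fun_eq_iff)

lemma Lxx_terms_gauss:
  assumes "\<alpha> 0 > 0" and "t < T" and "\<And>z. u t z = terms_gauss \<alpha> xbar T y es t z"
  shows "Lxx u t x = terms_gauss \<alpha> xbar T y (Lxx_terms es) t x"
proof -
  have u: "(\<lambda>z. u t z) = (\<lambda>z. terms_gauss \<alpha> xbar T y es t z)"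
    using assms(3) by simp
  show ?thesis
    by (simp only: Lxx_def u deriv_terms_gauss_x[where \<alpha> = \<alpha>, OF assms(1,2)])
       (simp add: Lxx_terms_def terms_gauss_def)
qed

lemma terms_gauss_L0:
  assumes "\<alpha> 0 > 0" and "t < T"
  shows "\<alpha> 0 / 2 * terms_gauss \<alpha> xbar T y (Lxx_terms es) t x + terms_gauss \<alpha> xbar T y (dt_terms es) t x =
    terms_gauss \<alpha> xbar T y (L0_terms es) t x"
  by (simp add: terms_gauss_def L0_terms_def)

lemma terms_gauss_single_weak_limit:
  assumes a0: "\<alpha> 0 > 0" and p: "p > 0" and \<phi>: "smooth \<phi>" and \<phi>_zero: "\<And>x. R < \<bar>x\<bar> \<Longrightarrow> \<phi> x = 0"
  shows "\<And>t. t < T \<Longrightarrow> integrable lborel (\<lambda>x. terms_gauss \<alpha> xbar T y [(c, i, p, k)] t x * \<phi> x)"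
    and "((\<lambda>t. integral\<^sup>L lborel (\<lambda>x. terms_gauss \<alpha> xbar T y [(c, i, p, k)] t x * \<phi> x)) \<longlongrightarrow> 0) (at_left T)"
proof -
  define \<psi> where "\<psi> x = (x - xbar) ^ i * \<phi> x" for x
  have \<psi>: "smooth \<psi>"
    unfolding \<psi>_def by (rule smooth_power_times[OF \<phi>])
  have \<psi>_zero: "\<And>x. R < \<bar>x\<bar> \<Longrightarrow> \<psi> x = 0"
    using \<phi>_zero by (simp add: \<psi>_def)
  have eq: "terms_gauss \<alpha> xbar T y [(c, i, p, k)] t x * \<phi> x =
      c \<alpha> * (T - t) ^ p * (gauss_deriv (\<alpha> 0) T y k t x * \<psi> x)" for t x
    by (simp add: \<psi>_def)
  show "integrable lborel (\<lambda>x. terms_gauss \<alpha> xbar T y [(c, i, p, k)] t x * \<phi> x)" if "t < T" for t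
    unfolding eq using gauss_deriv_integral_by_parts[OF a0 that \<psi> \<psi>_zero] by simp
  have "((\<lambda>t. c \<alpha> * ((T - t) ^ p * integral\<^sup>L lborel (\<lambda>x. gauss_deriv (\<alpha> 0) T y k t x * \<psi> x))) \<longlongrightarrow> 0)
      (at_left T)"
    by (rule tendsto_mult_right_zero[OF tendsto_power_times_gauss_deriv_integral[OF a0 p \<psi> \<psi>_zero]])
  then show "((\<lambda>t. integral\<^sup>L lborel (\<lambda>x. terms_gauss \<alpha> xbar T y [(c, i, p, k)] t x * \<phi> x)) \<longlongrightarrow> 0) (at_left T)"
    unfolding eq by (simp add: mult.assoc)
qed

lemma terms_gauss_weak_limit:
  assumes a0: "\<alpha> 0 > 0" and \<phi>: "smooth \<phi>" and \<phi>_zero: "\<And>x. R < \<bar>x\<bar> \<Longrightarrow> \<phi> x = 0"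
    and pos: "\<forall>(c, i, p, k)\<in>set es. p > 0"
  shows "(\<forall>t<T. integrable lborel (\<lambda>x. terms_gauss \<alpha> xbar T y es t x * \<phi> x)) \<and>
    ((\<lambda>t. integral\<^sup>L lborel (\<lambda>x. terms_gauss \<alpha> xbar T y es t x * \<phi> x)) \<longlongrightarrow> 0) (at_left T)"
  using pos
proof (induction es)
  case Nil
  then show ?case by simp
next
  case (Cons e es)
  obtain c i p k where e: "e = (c, i, p, k)"
    by (cases e)
  have p: "p > 0" and IH: "(\<forall>t<T. integrable lborel (\<lambda>x. terms_gauss \<alpha> xbar T y es t x * \<phi> x)) \<and>
      ((\<lambda>t. integral\<^sup>L lborel (\<lambda>x. terms_gauss \<alpha> xbar T y es t x * \<phi> x)) \<longlongrightarrow> 0) (at_left T)"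
    using Cons by (auto simp: e)
  have single_integrable: "integrable lborel (\<lambda>x. terms_gauss \<alpha> xbar T y [(c, i, p, k)] t x * \<phi> x)"
    if "t < T" for t
    by (rule terms_gauss_single_weak_limit(1)[where R = R]) (use a0 p \<phi> \<phi>_zero that in auto)
  have single_limit:
    "((\<lambda>t. integral\<^sup>L lborel (\<lambda>x. terms_gauss \<alpha> xbar T y [(c, i, p, k)] t x * \<phi> x)) \<longlongrightarrow> 0) (at_left T)"
    by (rule terms_gauss_single_weak_limit(2)[where R = R]) (use a0 p \<phi> \<phi>_zero in auto)
  have split: "terms_gauss \<alpha> xbar T y (e # es) t x * \<phi> x =
      terms_gauss \<alpha> xbar T y [(c, i, p, k)] t x * \<phi> x + terms_gauss \<alpha> xbar T y es t x * \<phi> x" for t x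
    by (simp add: e algebra_simps)
  have integral_split: "integral\<^sup>L lborel (\<lambda>x. terms_gauss \<alpha> xbar T y (e # es) t x * \<phi> x) =
      integral\<^sup>L lborel (\<lambda>x. terms_gauss \<alpha> xbar T y [(c, i, p, k)] t x * \<phi> x) +
      integral\<^sup>L lborel (\<lambda>x. terms_gauss \<alpha> xbar T y es t x * \<phi> x)" if "t < T" for t
    unfolding split using single_integrable[OF that] IH that by simp
  have "\<forall>\<^sub>F t in at_left T. integral\<^sup>L lborel (\<lambda>x. terms_gauss \<alpha> xbar T y [(c, i, p, k)] t x * \<phi> x) +
      integral\<^sup>L lborel (\<lambda>x. terms_gauss \<alpha> xbar T y es t x * \<phi> x) =
      integral\<^sup>L lborel (\<lambda>x. terms_gauss \<alpha> xbar T y (e # es) t x * \<phi> x)"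
    using eventually_at_left_real[of "T - 1" T] by (auto elim!: eventually_mono simp: integral_split)
  from Lim_transform_eventually[OF tendsto_add_zero[OF single_limit IH[THEN conjunct2]] this]
  show ?case
    unfolding split using single_integrable IH by auto
qed

section \<open>The coefficients \<open>c\<^sup>n\<^sub>i\<^sub>,\<^sub>j\<^sub>,\<^sub>k\<close>\<close>

definition expansion_coeff :: "nat \<Rightarrow> nat \<Rightarrow> nat \<Rightarrow> nat \<Rightarrow> (nat \<Rightarrow> real) \<Rightarrow> real" where
  "expansion_coeff m i j k \<alpha> =
     (\<Sum>(c', i', p', k')\<leftarrow>expansion_terms m. if (i', 2 * p', k') = (i, j, k) then c' \<alpha> else 0)"

definition expansion :: "(nat \<Rightarrow> real) \<Rightarrow> real \<Rightarrow> real \<Rightarrow> real \<Rightarrow> nat \<Rightarrow> real \<Rightarrow> real \<Rightarrow> real" where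
  "expansion \<alpha> xbar T y m = Gform (\<lambda>i j k. expansion_coeff m i j k \<alpha>) m (\<alpha> 0) xbar T y"

lemma poly_fun_sum_list_select:
  assumes "poly_coeffs n es"
  shows "(\<lambda>\<alpha>. \<Sum>(c, i, p, k)\<leftarrow>es. if P i p k then c \<alpha> else 0) \<in> poly_fun n"
  using assms
proof (induction es)
  case Nil
  then show ?case
    using poly_fun.const[of 0 n] by simp
next
  case (Cons e es)
  obtain c i p k where e: "e = (c, i, p, k)"
    by (cases e)
  have "(\<lambda>\<alpha>. if P i p k then c \<alpha> else 0) \<in> poly_fun n"
    using Cons.prems poly_fun.const[of 0 n] by (cases "P i p k") (simp_all add: e)
  from poly_fun.add[OF this Cons.IH] Cons.prems
  show ?case
    by (simp add: e)
qed

lemma expansion_coeff_poly_fun: "expansion_coeff m i j k \<in> poly_fun m"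
  using poly_fun_sum_list_select[OF poly_coeffs_expansion_terms[of m],
      where P = "\<lambda>i' p' k'. (i', 2 * p', k') = (i, j, k)"]
  by (simp add: expansion_coeff_def[abs_def])

lemma sum_list_regroup:
  fixes key :: "'e \<Rightarrow> 'k" and f :: "'e \<Rightarrow> real"
  assumes "finite K" and "\<forall>e\<in>set es. key e \<in> K"
  shows "(\<Sum>\<kappa>\<in>K. (\<Sum>e\<leftarrow>es. if key e = \<kappa> then f e else 0) * g \<kappa>) = (\<Sum>e\<leftarrow>es. f e * g (key e))"
  using assms(2)
proof (induction es)
  case Nil
  then show ?case by simp
next
  case (Cons e es)
  have "(\<Sum>\<kappa>\<in>K. (if key e = \<kappa> then f e else 0) * g \<kappa>) = f e * g (key e)"
    using Cons.prems assms(1) by (simp add: if_distrib[of "\<lambda>u. u * _"] sum.delta cong: if_cong)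
  then show ?case
    using Cons by (simp add: distrib_right sum.distrib)
qed

lemma finite_idx: "finite (idx n)"
proof (rule finite_subset)
  show "idx n \<subseteq> {..n} \<times> {..n * (n + 3)} \<times> {..n * (n + 5) div 2}"
    by (auto simp: idx_def)
qed auto

lemma expansion_eq_terms_gauss:
  assumes "t \<le> T"
  shows "expansion \<alpha> xbar T y m t x = terms_gauss \<alpha> xbar T y (expansion_terms m) t x"
proof -
  let ?key = "\<lambda>(c :: (nat \<Rightarrow> real) \<Rightarrow> real, i :: nat, p :: nat, k :: nat). (i, 2 * p, k)"
  let ?f = "\<lambda>(c :: (nat \<Rightarrow> real) \<Rightarrow> real, i :: nat, p :: nat, k :: nat). c \<alpha>"
  let ?g = "\<lambda>(i, j, k). (x - xbar) ^ i * sqrt (T - t) ^ j * (deriv ^^ k) (\<lambda>z. G0 (\<alpha> 0) t z T y) x"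
  have keys: "\<forall>e\<in>set (expansion_terms m). ?key e \<in> idx m"
    using expansion_terms_indices by (fastforce simp: idx_def)
  have "expansion \<alpha> xbar T y m t x =
      (\<Sum>\<kappa>\<in>idx m. (\<Sum>e\<leftarrow>expansion_terms m. if ?key e = \<kappa> then ?f e else 0) * ?g \<kappa>)"
    unfolding expansion_def Gform_def expansion_coeff_def
    by (intro sum.cong refl) (auto intro!: arg_cong[where f = sum_list] map_cong)
  also have "\<dots> = (\<Sum>e\<leftarrow>expansion_terms m. ?f e * ?g (?key e))"
    by (rule sum_list_regroup[OF finite_idx keys])
  also have "\<dots> = terms_gauss \<alpha> xbar T y (expansion_terms m) t x"
  proof -
    have "?f e * ?g (?key e) =
        (case e of (c, i, p, k) \<Rightarrow> c \<alpha> * (x - xbar) ^ i * (T - t) ^ p * gauss_deriv (\<alpha> 0) T y k t x)" for e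
      using assms by (cases e) (simp add: power_mult gauss_deriv_def)
    then show ?thesis
      by (simp add: terms_gauss_def terms_val_def)
  qed
  finally show ?thesis .
qed

section \<open>The Cauchy problems\<close>

lemma expansion_0:
  assumes "t \<le> T"
  shows "expansion \<alpha> xbar T y 0 t x = G0 (\<alpha> 0) t x T y"
  using assms by (simp add: expansion_eq_terms_gauss expansion_terms_0 gauss_deriv_def)

lemma expansion_solves_L0:
  assumes a0: "\<alpha> 0 > 0" and m: "m \<ge> 1" and t: "t < T"
  shows "(\<lambda>s. expansion \<alpha> xbar T y m s x) differentiable (at t)"
    and "(\<lambda>z. expansion \<alpha> xbar T y m t z) differentiable (at x)"
    and "(\<lambda>z. deriv (\<lambda>w. expansion \<alpha> xbar T y m t w) z) differentiable (at x)"
    and "\<alpha> 0 / 2 * Lxx (expansion \<alpha> xbar T y m) t x + deriv (\<lambda>s. expansion \<alpha> xbar T y m s x) t =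
      - (\<Sum>h = 1..m. \<alpha> h * (x - xbar) ^ h * Lxx (expansion \<alpha> xbar T y (m - h)) t x)"
proof -
  let ?U = "\<lambda>m. expansion \<alpha> xbar T y m" and ?S = "\<lambda>m. terms_gauss \<alpha> xbar T y (expansion_terms m)"
  have U_t: "(\<lambda>z. ?U m t z) = (\<lambda>z. ?S m t z)"
    using t by (simp add: expansion_eq_terms_gauss)
  have dt: "((\<lambda>s. ?U m s x) has_real_derivative terms_gauss \<alpha> xbar T y (dt_terms (expansion_terms m)) t x) (at t)"
    by (rule has_field_derivative_transform_within_open[OF terms_gauss_has_derivative_t[where \<alpha> = \<alpha>, OF a0 t], of "{..<T}"])
       (use t in \<open>auto simp: expansion_eq_terms_gauss\<close>)
  then show "(\<lambda>s. ?U m s x) differentiable (at t)"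
    by (auto simp: real_differentiable_def)
  show "(\<lambda>z. ?U m t z) differentiable (at x)"
    unfolding U_t real_differentiable_def using terms_gauss_has_derivative_x[where \<alpha> = \<alpha>, OF a0 t] by blast
  show "(\<lambda>z. deriv (\<lambda>w. ?U m t w) z) differentiable (at x)"
    unfolding U_t deriv_terms_gauss_x[where \<alpha> = \<alpha>, OF a0 t] real_differentiable_def
    using terms_gauss_has_derivative_x[where \<alpha> = \<alpha>, OF a0 t] by blast
  have Lxx_U: "Lxx (?U m') t x = terms_gauss \<alpha> xbar T y (Lxx_terms (expansion_terms m')) t x" for m'
    by (rule Lxx_terms_gauss[where \<alpha> = \<alpha>, OF a0 t]) (use t in \<open>simp add: expansion_eq_terms_gauss\<close>)
  have "\<alpha> 0 / 2 * Lxx (?U m) t x + deriv (\<lambda>s. ?U m s x) t =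
      terms_gauss \<alpha> xbar T y (L0_terms (expansion_terms m)) t x"
    unfolding Lxx_U DERIV_imp_deriv[OF dt] by (rule terms_gauss_L0[where \<alpha> = \<alpha>, OF a0 t])
  also have "\<dots> = - (\<Sum>h = 1..m. \<alpha> h * (x - xbar) ^ h * Lxx (?U (m - h)) t x)"
    by (simp add: terms_gauss_def terms_val_L0_expansion_terms[OF m] Lxx_U sum_negf[symmetric])
  finally show "\<alpha> 0 / 2 * Lxx (?U m) t x + deriv (\<lambda>s. ?U m s x) t =
      - (\<Sum>h = 1..m. \<alpha> h * (x - xbar) ^ h * Lxx (?U (m - h)) t x)" .
qed

lemma expansion_terminal_condition:
  assumes a0: "\<alpha> 0 > 0" and m: "m \<ge> 1" and \<phi>: "test_function \<phi>"
  shows "\<forall>t\<in>{0<..<T}. integrable lborel (\<lambda>x. expansion \<alpha> xbar T y m t x * \<phi> x)"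
    and "((\<lambda>t. integral\<^sup>L lborel (\<lambda>x. expansion \<alpha> xbar T y m t x * \<phi> x)) \<longlongrightarrow> 0) (at_left T)"
proof -
  obtain R where "\<forall>x\<in>{x. \<phi> x \<noteq> 0}. norm x \<le> R"
    using \<phi> by (auto simp: test_function_def bounded_iff)
  then have R: "\<And>x. R < \<bar>x\<bar> \<Longrightarrow> \<phi> x = 0"
    by force
  have pos: "\<forall>(c, i, p, k)\<in>set (expansion_terms m). p > 0"
    using expansion_terms_indices m by fastforce
  have weak: "(\<forall>t<T. integrable lborel (\<lambda>x. terms_gauss \<alpha> xbar T y (expansion_terms m) t x * \<phi> x)) \<and>
      ((\<lambda>t. integral\<^sup>L lborel (\<lambda>x. terms_gauss \<alpha> xbar T y (expansion_terms m) t x * \<phi> x)) \<longlongrightarrow> 0) (at_left T)"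
    by (rule terms_gauss_weak_limit[where R = R]) (use a0 \<phi> R pos in \<open>auto simp: smooth_def test_function_def\<close>)
  then show "\<forall>t\<in>{0<..<T}. integrable lborel (\<lambda>x. expansion \<alpha> xbar T y m t x * \<phi> x)"
    by (simp add: expansion_eq_terms_gauss)
  have "\<forall>\<^sub>F t in at_left T. integral\<^sup>L lborel (\<lambda>x. terms_gauss \<alpha> xbar T y (expansion_terms m) t x * \<phi> x) =
      integral\<^sup>L lborel (\<lambda>x. expansion \<alpha> xbar T y m t x * \<phi> x)"
    using eventually_at_left_real[of "T - 1" T] by (auto elim!: eventually_mono simp: expansion_eq_terms_gauss)
  with weak show "((\<lambda>t. integral\<^sup>L lborel (\<lambda>x. expansion \<alpha> xbar T y m t x * \<phi> x)) \<longlongrightarrow> 0) (at_left T)"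
    by (blast intro: Lim_transform_eventually)
qed

lemma cauchy_sol_expansion:
  assumes "\<alpha> 0 > 0" and "m \<ge> 1"
  shows "cauchy_sol (\<alpha> 0) T (expansion \<alpha> xbar T y m)
    (\<lambda>t x. - (\<Sum>h = 1..m. \<alpha> h * (x - xbar) ^ h * Lxx (expansion \<alpha> xbar T y (m - h)) t x))"
  using expansion_solves_L0[where \<alpha> = \<alpha>, OF assms] expansion_terminal_condition[where \<alpha> = \<alpha>, OF assms]
  unfolding cauchy_sol_def by auto

theorem mainTheorem13:
  fixes N n :: nat
  assumes "n \<le> N"
  shows "\<exists>c :: nat \<Rightarrow> nat \<Rightarrow> nat \<Rightarrow> nat \<Rightarrow> ((nat \<Rightarrow> real) \<Rightarrow> real).
    (\<forall>m\<le>n. \<forall>i j k. c m i j k \<in> poly_fun m) \<and>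
    (\<forall>(a :: real \<Rightarrow> real) (xbar :: real) (T :: real) (y :: real).
       assumption_A N a \<and> 0 < a xbar \<and> 0 < T \<longrightarrow>
       (let \<alpha> = alpha a xbar;
            G = (\<lambda>m. Gform (\<lambda>i j k. c m i j k \<alpha>) m (\<alpha> 0) xbar T y)
        in (\<forall>t\<in>{0<..<T}. \<forall>x. G 0 t x = G0 (\<alpha> 0) t x T y) \<and>
           (\<forall>m\<in>{1..n}. cauchy_sol (\<alpha> 0) T (G m)
              (\<lambda>t x. - (\<Sum>h = 1..m. \<alpha> h * (x - xbar)^h * Lxx (G (m - h)) t x)))))"
proof (intro exI[of _ expansion_coeff] conjI allI impI)
  show "expansion_coeff m i j k \<in> poly_fun m" for m i j k
    by (rule expansion_coeff_poly_fun)
next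
  fix a :: "real \<Rightarrow> real" and xbar T y :: real
  assume "assumption_A N a \<and> 0 < a xbar \<and> 0 < T"
  then have a0: "alpha a xbar 0 > 0"
    by (simp add: alpha_def)
  show "let \<alpha> = alpha a xbar; G = (\<lambda>m. Gform (\<lambda>i j k. expansion_coeff m i j k \<alpha>) m (\<alpha> 0) xbar T y)
    in (\<forall>t\<in>{0<..<T}. \<forall>x. G 0 t x = G0 (\<alpha> 0) t x T y) \<and>
       (\<forall>m\<in>{1..n}. cauchy_sol (\<alpha> 0) T (G m)
          (\<lambda>t x. - (\<Sum>h = 1..m. \<alpha> h * (x - xbar)^h * Lxx (G (m - h)) t x)))"
    using expansion_0 cauchy_sol_expansion[where \<alpha> = "alpha a xbar", OF a0]
    unfolding Let_def expansion_def[symmetric] by auto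
qed

end
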